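(* Let $\mathbb F$ be an algebraically closed field, let $S$ be a left noetherian domain which is an $\mathbb F$-algebra with trivial center (i.e. $Z(S)=\mathbb F$), and let $B=S[x]$ be the usual polynomial ring in one central variable $x$ over $S$. Let $I=Bf_1+\cdots+Bf_r$ be a left ideal of $B$, where each $f_i\neq 0$ is normal in $B$ (i.e. $Bf_i=f_iB$) and has leading coefficient $\mathrm{lc}(f_i)\in S^*$. If $V(I)=\emptyset$, then $I=B$.
   Context: $B=S[x]$ is regarded as a skew PBW extension of $S$ in one variable. For $z\in S$, $\langle z\rangle$ denotes the two-sided ideal of $B$ generated by $x-z$; $z$ is a root of $f\in B$ iff $f\in\langle z\rangle$. For a subset $T\subseteq B$, $V(T)=\{z\in S: f\in\langle z\rangle \text{ for all } f\in T\}$. $S^*$ denotes the group of units of $S$; $\mathrm{lc}(f)$ is the coefficient of the highest power of $x$ in $f$. *)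

theory Defs
  imports "HOL-Algebra.Algebraic_Closure" "HOL-Algebra.UnivPoly"
begin

definition nc_domain :: "('a, 'm) ring_scheme \<Rightarrow> bool" where
  "nc_domain R \<longleftrightarrow> ring R \<and> \<one>\<^bsub>R\<^esub> \<noteq> \<zero>\<^bsub>R\<^esub> \<and>
     (\<forall>a\<in>carrier R. \<forall>b\<in>carrier R. a \<otimes>\<^bsub>R\<^esub> b = \<zero>\<^bsub>R\<^esub> \<longrightarrow> a = \<zero>\<^bsub>R\<^esub> \<or> b = \<zero>\<^bsub>R\<^esub>)"

definition left_ideal :: "('a, 'm) ring_scheme \<Rightarrow> 'a set \<Rightarrow> bool" where
  "left_ideal R I \<longleftrightarrow> additive_subgroup I R \<and>
     (\<forall>a\<in>carrier R. \<forall>i\<in>I. a \<otimes>\<^bsub>R\<^esub> i \<in> I)"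

definition left_noetherian :: "('a, 'm) ring_scheme \<Rightarrow> bool" where
  "left_noetherian R \<longleftrightarrow>
     (\<forall>C :: nat \<Rightarrow> 'a set. (\<forall>n. left_ideal R (C n) \<and> C n \<subseteq> C (Suc n))
        \<longrightarrow> (\<exists>N. \<forall>n\<ge>N. C n = C N))"

definition center :: "('a, 'm) ring_scheme \<Rightarrow> 'a set" where
  "center R = {z \<in> carrier R. \<forall>a\<in>carrier R. z \<otimes>\<^bsub>R\<^esub> a = a \<otimes>\<^bsub>R\<^esub> z}"

definition left_gen :: "('a, 'm) ring_scheme \<Rightarrow> 'a list \<Rightarrow> 'a set" where
  "left_gen B fs = {finsum B (\<lambda>i. b i \<otimes>\<^bsub>B\<^esub> fs ! i) {..<length fs} | b.
                      b \<in> {..<length fs} \<rightarrow> carrier B}"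

definition normal_elem :: "('a, 'm) ring_scheme \<Rightarrow> 'a \<Rightarrow> bool" where
  "normal_elem B f \<longleftrightarrow> (\<lambda>b. b \<otimes>\<^bsub>B\<^esub> f) ` carrier B = (\<lambda>b. f \<otimes>\<^bsub>B\<^esub> b) ` carrier B"

(* The two-sided ideal <z> of S[x] generated by x - z *)
definition root_ideal :: "('a, 'm) ring_scheme \<Rightarrow> 'a \<Rightarrow> (nat \<Rightarrow> 'a) set" where
  "root_ideal R z = genideal (UP R)
     {monom (UP R) \<one>\<^bsub>R\<^esub> 1 \<ominus>\<^bsub>UP R\<^esub> monom (UP R) z 0}"

definition zero_set :: "('a, 'm) ring_scheme \<Rightarrow> (nat \<Rightarrow> 'a) set \<Rightarrow> 'a set" where
  "zero_set R T = {z \<in> carrier R. \<forall>f\<in>T. f \<in> root_ideal R z}"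

end

theory Submission
  imports Defs
begin

text \<open>Let \<open>f\<close> be a normal generator with leading coefficient \<open>u \<in> S\<^sup>*\<close>. For every \<open>a \<in> S\<close>,
  normality gives \<open>a f = f b\<close>, and comparing degrees and leading coefficients forces \<open>b\<close> to be
  the constant \<open>u\<inverse> a u\<close>; hence \<open>f u\<inverse>\<close> has central coefficients, i.e. lies in \<open>Z[x]\<close> for the
  field \<open>Z = Z(S)\<close>. By normality again \<open>f u\<inverse> \<in> B f \<subseteq> I\<close>, so these polynomials lie in
  \<open>J = I \<inter> Z[x]\<close>, an ideal of \<open>Z[x]\<close>. If \<open>I \<noteq> B\<close>
  then \<open>1 \<notin> J\<close>, so, \<open>Z\<close> being algebraically closed, all elements of \<open>J\<close> are multiples of a
  common linear factor \<open>x - \<lambda>\<close>. Thus every \<open>f = (f u\<inverse>) u\<close> lies in the two-sided ideal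
  \<open>\<langle>\<lambda>\<rangle>\<close>, whence \<open>\<lambda> \<in> V(I)\<close>.\<close>

section \<open>Finitely generated left ideals and root ideals\<close>

context ring
begin

lemma left_gen_mem:
  assumes "set fs \<subseteq> carrier R" "f \<in> set fs"
  shows "f \<in> left_gen R fs"
proof -
  obtain j where j: "j < length fs" "fs ! j = f"
    using assms(2) by (auto simp: in_set_conv_nth)
  have fs: "\<And>i. i < length fs \<Longrightarrow> fs ! i \<in> carrier R"
    using assms(1) by auto
  define b where "b i = (if i = j then \<one> else \<zero>)" for i
  have "(\<Oplus>i\<in>{..<length fs}. b i \<otimes> fs ! i) = (\<Oplus>i\<in>{..<length fs}. if j = i then fs ! i else \<zero>)"
    by (rule finsum_cong) (auto simp: b_def fs Pi_def simp_implies_def)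
  also have "\<dots> = f"
    using j fs by (subst finsum_singleton) (auto simp: Pi_def)
  finally show ?thesis
    unfolding left_gen_def by (auto simp: b_def intro!: exI[of _ b])
qed

lemma left_gen_zero:
  assumes fs: "set fs \<subseteq> carrier R"
  shows "\<zero> \<in> left_gen R fs"
proof -
  have fs_nth: "\<And>i. i < length fs \<Longrightarrow> fs ! i \<in> carrier R"
    using fs by auto
  have "(\<Oplus>i\<in>{..<length fs}. \<zero> \<otimes> fs ! i) = \<zero>"
    using fs_nth by (simp cong: finsum_cong)
  then show ?thesis
    unfolding left_gen_def by (auto intro!: exI[of _ "\<lambda>i. \<zero>"])
qed

lemma left_gen_add:
  assumes fs: "set fs \<subseteq> carrier R" and x_mem: "x \<in> left_gen R fs" and y_mem: "y \<in> left_gen R fs"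
  shows "x \<oplus> y \<in> left_gen R fs"
proof -
  let ?n = "length fs"
  have fs_nth: "\<And>i. i < length fs \<Longrightarrow> fs ! i \<in> carrier R"
    using fs by auto
  obtain b where b: "b \<in> {..<?n} \<rightarrow> carrier R" and x: "x = (\<Oplus>i\<in>{..<?n}. b i \<otimes> fs ! i)"
    using x_mem unfolding left_gen_def by blast
  obtain c where c: "c \<in> {..<?n} \<rightarrow> carrier R" and y: "y = (\<Oplus>i\<in>{..<?n}. c i \<otimes> fs ! i)"
    using y_mem unfolding left_gen_def by blast
  have "x \<oplus> y = (\<Oplus>i\<in>{..<?n}. b i \<otimes> fs ! i \<oplus> c i \<otimes> fs ! i)"
    unfolding x y using b c fs_nth by (intro finsum_addf[symmetric]) auto
  also have "\<dots> = (\<Oplus>i\<in>{..<?n}. (b i \<oplus> c i) \<otimes> fs ! i)"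
    using b c fs_nth by (intro finsum_cong) (auto simp: Pi_def simp_implies_def l_distr)
  finally show ?thesis
    unfolding left_gen_def using b c by (auto intro!: exI[of _ "\<lambda>i. b i \<oplus> c i"])
qed

lemma left_gen_lmult:
  assumes fs: "set fs \<subseteq> carrier R" and a: "a \<in> carrier R" and x_mem: "x \<in> left_gen R fs"
  shows "a \<otimes> x \<in> left_gen R fs"
proof -
  let ?n = "length fs"
  have fs_nth: "\<And>i. i < length fs \<Longrightarrow> fs ! i \<in> carrier R"
    using fs by auto
  obtain b where b: "b \<in> {..<?n} \<rightarrow> carrier R" and x: "x = (\<Oplus>i\<in>{..<?n}. b i \<otimes> fs ! i)"
    using x_mem unfolding left_gen_def by blast
  have "a \<otimes> x = (\<Oplus>i\<in>{..<?n}. a \<otimes> (b i \<otimes> fs ! i))"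
    unfolding x using a b fs_nth by (intro finsum_rdistr) auto
  also have "\<dots> = (\<Oplus>i\<in>{..<?n}. (a \<otimes> b i) \<otimes> fs ! i)"
    using a b fs_nth by (intro finsum_cong) (auto simp: Pi_def simp_implies_def m_assoc)
  finally show ?thesis
    unfolding left_gen_def using a b by (auto intro!: exI[of _ "\<lambda>i. a \<otimes> b i"])
qed

lemma left_ideal_left_gen:
  assumes "set fs \<subseteq> carrier R"
  shows "left_ideal R (left_gen R fs)"
proof -
  have sub: "left_gen R fs \<subseteq> carrier R"
    unfolding left_gen_def using assms by (auto intro!: finsum_closed simp: Pi_def subset_iff)
  have "\<ominus> x \<in> left_gen R fs" if "x \<in> left_gen R fs" for x
    using left_gen_lmult[OF assms, of "\<ominus> \<one>" x] that sub by (auto simp: l_minus)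
  then have "subgroup (left_gen R fs) (add_monoid R)"
    using sub left_gen_zero[OF assms] left_gen_add[OF assms]
    by (intro add.subgroupI) (auto simp: a_inv_def)
  then show ?thesis
    unfolding left_ideal_def using additive_subgroupI left_gen_lmult[OF assms] by blast
qed

lemma finsum_mem_additive_subgroup:
  assumes "additive_subgroup J R" "finite A" "\<And>i. i \<in> A \<Longrightarrow> f i \<in> J"
  shows "finsum R f A \<in> J"
  using assms(2,3)
proof (induction A rule: finite_induct)
  case empty
  show ?case
    using additive_subgroup.zero_closed[OF assms(1)] by simp
next
  case (insert a A)
  have "f \<in> insert a A \<rightarrow> carrier R"
    using insert additive_subgroup.a_subset[OF assms(1)] by auto
  then show ?case
    using insert additive_subgroup.a_closed[OF assms(1)] by (simp add: finsum_insert)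
qed

lemma left_gen_subset:
  assumes "left_ideal R J" "set fs \<subseteq> J"
  shows "left_gen R fs \<subseteq> J"
proof
  fix x assume "x \<in> left_gen R fs"
  then obtain b where b: "b \<in> {..<length fs} \<rightarrow> carrier R"
    and x: "x = (\<Oplus>i\<in>{..<length fs}. b i \<otimes> fs ! i)"
    unfolding left_gen_def by auto
  have "b i \<otimes> fs ! i \<in> J" if "i < length fs" for i
  proof -
    have "b i \<in> carrier R" "fs ! i \<in> J"
      using b assms(2) nth_mem[OF that] that by auto
    then show ?thesis
      using assms(1) unfolding left_ideal_def by blast
  qed
  then show "x \<in> J"
    unfolding x using assms(1)
    by (intro finsum_mem_additive_subgroup) (auto simp: left_ideal_def)
qed

lemma left_ideal_one_imp_carrier:
  assumes "left_ideal R I" "\<one> \<in> I"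
  shows "I = carrier R"
proof
  show "I \<subseteq> carrier R"
    using assms(1) additive_subgroup.a_subset unfolding left_ideal_def by blast
  show "carrier R \<subseteq> I"
  proof
    fix a assume "a \<in> carrier R"
    then have "a \<otimes> \<one> \<in> I"
      using assms unfolding left_ideal_def by blast
    then show "a \<in> I"
      using \<open>a \<in> carrier R\<close> by simp
  qed
qed

lemma left_gen_mult_normal:
  assumes "set fs \<subseteq> carrier R" "f \<in> set fs" "normal_elem R f" "b \<in> carrier R"
  shows "f \<otimes> b \<in> left_gen R fs"
proof -
  have "f \<otimes> b \<in> (\<lambda>b. b \<otimes> f) ` carrier R"
    using assms(3) imageI[OF assms(4), of "\<lambda>b. f \<otimes> b"] unfolding normal_elem_def by (simp only:)
  then obtain b' where "b' \<in> carrier R" "f \<otimes> b = b' \<otimes> f"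
    by blast
  then show ?thesis
    using left_ideal_left_gen[OF assms(1)] left_gen_mem[OF assms(1,2)]
    unfolding left_ideal_def by simp
qed

lemma root_ideal_is_ideal:
  assumes "z \<in> carrier R"
  shows "ideal (root_ideal R z) (UP R)"
proof -
  interpret P: UP_ring R "UP R"
    by (simp add: UP_ring_def ring_axioms)
  show ?thesis
    unfolding root_ideal_def using assms by (intro P.P.genideal_ideal) auto
qed

lemma zero_set_left_genI:
  assumes "z \<in> carrier R" "set fs \<subseteq> root_ideal R z"
  shows "z \<in> zero_set R (left_gen (UP R) fs)"
proof -
  interpret P: UP_ring R "UP R"
    by (simp add: UP_ring_def ring_axioms)
  have "left_ideal (UP R) (root_ideal R z)"
    using root_ideal_is_ideal[OF assms(1)] unfolding left_ideal_def
    by (auto intro: ideal.axioms(1) ideal.I_l_closed)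
  then show ?thesis
    unfolding zero_set_def using assms P.P.left_gen_subset by blast
qed

end

section \<open>Polynomials over a subring\<close>

context ring
begin

lemma finsum_subring:
  assumes "subring K R" "finite A" "f \<in> A \<rightarrow> K"
  shows "finsum (R\<lparr>carrier := K\<rparr>) f A = finsum R f A"
proof -
  interpret K: ring "R\<lparr>carrier := K\<rparr>"
    using subring_is_ring[OF assms(1)] .
  show ?thesis
    using assms(2,3)
  proof (induction A rule: finite_induct)
    case empty
    show ?case by simp
  next
    case (insert a A)
    have "f \<in> A \<rightarrow> carrier R" "f a \<in> carrier R"
      using insert.prems subringE(1)[OF assms(1)] by auto
    then show ?case
      using insert K.finsum_insert[of A a f] finsum_insert[of A a f] by simp
  qed
qed

lemma carrier_UP_subring:
  assumes "K \<subseteq> carrier R"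
  shows "carrier (UP (R\<lparr>carrier := K\<rparr>)) = {p \<in> carrier (UP R). \<forall>n. p n \<in> K}"
  using assms by (auto simp: UP_def up_def Pi_def)

lemma UP_subring_zero: "\<zero>\<^bsub>UP (R\<lparr>carrier := K\<rparr>)\<^esub> = \<zero>\<^bsub>UP R\<^esub>"
  by (simp add: UP_def)

lemma UP_subring_one: "\<one>\<^bsub>UP (R\<lparr>carrier := K\<rparr>)\<^esub> = \<one>\<^bsub>UP R\<^esub>"
  by (simp add: UP_def cong: if_cong)

lemma UP_subring_monom:
  assumes "K \<subseteq> carrier R" "a \<in> K"
  shows "up_ring.monom (UP (R\<lparr>carrier := K\<rparr>)) a n = up_ring.monom (UP R) a n"
  using assms by (auto simp: UP_def cong: if_cong)

lemma UP_subring_add: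
  assumes "K \<subseteq> carrier R"
    and "p \<in> carrier (UP (R\<lparr>carrier := K\<rparr>))" "q \<in> carrier (UP (R\<lparr>carrier := K\<rparr>))"
  shows "p \<oplus>\<^bsub>UP (R\<lparr>carrier := K\<rparr>)\<^esub> q = p \<oplus>\<^bsub>UP R\<^esub> q"
  using assms carrier_UP_subring[OF assms(1)] by (simp add: UP_def)

lemma UP_subring_mult:
  assumes "subring K R"
    and p: "p \<in> carrier (UP (R\<lparr>carrier := K\<rparr>))" and q: "q \<in> carrier (UP (R\<lparr>carrier := K\<rparr>))"
  shows "p \<otimes>\<^bsub>UP (R\<lparr>carrier := K\<rparr>)\<^esub> q = p \<otimes>\<^bsub>UP R\<^esub> q"
proof -
  have K: "K \<subseteq> carrier R"
    using subringE(1)[OF assms(1)] .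
  have "p i \<in> K" "q i \<in> K" for i
    using p q carrier_UP_subring[OF K] by auto
  then have "p i \<otimes> q (n - i) \<in> K" for n i
    using subringE(6)[OF assms(1)] by blast
  then have "finsum (R\<lparr>carrier := K\<rparr>) (\<lambda>i. p i \<otimes> q (n - i)) {..n}
      = (\<Oplus>i\<in>{..n}. p i \<otimes> q (n - i))" for n
    by (intro finsum_subring[OF assms(1)]) auto
  then show ?thesis
    using p q carrier_UP_subring[OF K] by (simp add: UP_def)
qed

lemma UP_subring_a_inv:
  assumes "subring K R" and p: "p \<in> carrier (UP (R\<lparr>carrier := K\<rparr>))"
  shows "\<ominus>\<^bsub>UP (R\<lparr>carrier := K\<rparr>)\<^esub> p = \<ominus>\<^bsub>UP R\<^esub> p"
proof -
  have K: "K \<subseteq> carrier R"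
    using subringE(1)[OF assms(1)] .
  interpret P: UP_ring R "UP R"
    by (simp add: UP_ring_def ring_axioms)
  interpret Q: UP_ring "R\<lparr>carrier := K\<rparr>" "UP (R\<lparr>carrier := K\<rparr>)"
    using subring_is_ring[OF assms(1)] by (simp add: UP_ring_def)
  have closed: "\<ominus>\<^bsub>UP (R\<lparr>carrier := K\<rparr>)\<^esub> p \<in> carrier (UP (R\<lparr>carrier := K\<rparr>))"
    using p by simp
  have "\<ominus>\<^bsub>UP (R\<lparr>carrier := K\<rparr>)\<^esub> p \<oplus>\<^bsub>UP R\<^esub> p = \<zero>\<^bsub>UP R\<^esub>"
    using Q.P.l_neg[OF p] UP_subring_add[OF K closed p] UP_subring_zero by metis
  moreover have "p \<in> carrier (UP R)" "\<ominus>\<^bsub>UP (R\<lparr>carrier := K\<rparr>)\<^esub> p \<in> carrier (UP R)"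
    using p closed carrier_UP_subring[OF K] by auto
  ultimately show ?thesis
    by (simp add: P.P.minus_equality)
qed

lemma UP_subring_minus:
  assumes "subring K R"
    and p: "p \<in> carrier (UP (R\<lparr>carrier := K\<rparr>))" and q: "q \<in> carrier (UP (R\<lparr>carrier := K\<rparr>))"
  shows "p \<ominus>\<^bsub>UP (R\<lparr>carrier := K\<rparr>)\<^esub> q = p \<ominus>\<^bsub>UP R\<^esub> q"
proof -
  interpret Q: UP_ring "R\<lparr>carrier := K\<rparr>" "UP (R\<lparr>carrier := K\<rparr>)"
    using subring_is_ring[OF assms(1)] by (simp add: UP_ring_def)
  have "\<ominus>\<^bsub>UP (R\<lparr>carrier := K\<rparr>)\<^esub> q \<in> carrier (UP (R\<lparr>carrier := K\<rparr>))"
    using q by simp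
  then show ?thesis
    unfolding a_minus_def
    using UP_subring_add[OF subringE(1)[OF assms(1)] p] UP_subring_a_inv[OF assms(1) q]
    by simp
qed

lemma ideal_Int_carrier_UP_subcring:
  assumes "subcring K R" "left_ideal (UP R) I"
  shows "ideal (I \<inter> carrier (UP (R\<lparr>carrier := K\<rparr>))) (UP (R\<lparr>carrier := K\<rparr>))"
proof -
  let ?Q = "UP (R\<lparr>carrier := K\<rparr>)"
  let ?J = "I \<inter> carrier ?Q"
  have K: "subring K R"
    using assms(1) subcring.axioms(1) by blast
  have K_sub: "K \<subseteq> carrier R"
    using subringE(1)[OF K] .
  interpret Q: UP_cring "R\<lparr>carrier := K\<rparr>" ?Q
    using assms(1) subcring_iff[OF K_sub] by (simp add: UP_cring_def)
  interpret I: additive_subgroup I "UP R"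
    using assms(2) unfolding left_ideal_def by blast
  have Q_sub: "carrier ?Q \<subseteq> carrier (UP R)"
    using carrier_UP_subring[OF K_sub] by auto
  have l_closed: "x \<otimes>\<^bsub>?Q\<^esub> a \<in> ?J" if "a \<in> ?J" "x \<in> carrier ?Q" for a x
  proof -
    have "x \<otimes>\<^bsub>UP R\<^esub> a \<in> I"
      using assms(2) that Q_sub unfolding left_ideal_def by blast
    moreover have "x \<otimes>\<^bsub>?Q\<^esub> a \<in> carrier ?Q"
      using that by simp
    ultimately show ?thesis
      using that UP_subring_mult[OF K] by simp
  qed
  show ?thesis
  proof (rule idealI)
    show "ring ?Q"
      by (rule Q.UP_ring)
    show "subgroup ?J (add_monoid ?Q)"
    proof (rule Q.P.add.subgroupI)
      have "\<zero>\<^bsub>?Q\<^esub> \<in> ?J"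
        using I.zero_closed Q.P.zero_closed by (simp add: UP_subring_zero)
      then show "?J \<noteq> {}"
        by blast
      show "\<ominus>\<^bsub>?Q\<^esub> a \<in> ?J" if "a \<in> ?J" for a
        using that Q.P.a_inv_closed[of a] UP_subring_a_inv[OF K] by simp
      show "a \<oplus>\<^bsub>?Q\<^esub> b \<in> ?J" if "a \<in> ?J" "b \<in> ?J" for a b
        using that Q.P.add.m_closed[of a b] UP_subring_add[OF K_sub] by simp
    qed auto
    show "x \<otimes>\<^bsub>?Q\<^esub> a \<in> ?J" if "a \<in> ?J" "x \<in> carrier ?Q" for a x
      using l_closed that .
    show "a \<otimes>\<^bsub>?Q\<^esub> x \<in> ?J" if "a \<in> ?J" "x \<in> carrier ?Q" for a x
      using l_closed[OF that] Q.P.m_comm[of a x] that by simp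
  qed
qed

lemma linear_factor_multiple_in_root_ideal:
  assumes "subring K R" "x \<in> K" "q \<in> carrier (UP (R\<lparr>carrier := K\<rparr>))"
  shows "q \<otimes>\<^bsub>UP (R\<lparr>carrier := K\<rparr>)\<^esub> (up_ring.monom (UP (R\<lparr>carrier := K\<rparr>)) \<one> 1
           \<ominus>\<^bsub>UP (R\<lparr>carrier := K\<rparr>)\<^esub> up_ring.monom (UP (R\<lparr>carrier := K\<rparr>)) x 0) \<in> root_ideal R x"
proof -
  let ?Q = "UP (R\<lparr>carrier := K\<rparr>)"
  have K: "K \<subseteq> carrier R"
    using subringE(1)[OF assms(1)] .
  interpret P: UP_ring R "UP R"
    by (simp add: UP_ring_def ring_axioms)
  interpret Q: UP_ring "R\<lparr>carrier := K\<rparr>" ?Q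
    using subring_is_ring[OF assms(1)] by (simp add: UP_ring_def)
  have one: "\<one> \<in> K"
    using subringE(3)[OF assms(1)] .
  have X: "up_ring.monom ?Q \<one> 1 \<in> carrier ?Q" "up_ring.monom ?Q x 0 \<in> carrier ?Q"
    using one assms(2) Q.monom_closed by auto
  let ?XQ = "up_ring.monom ?Q \<one> 1 \<ominus>\<^bsub>?Q\<^esub> up_ring.monom ?Q x 0"
  let ?X = "up_ring.monom (UP R) \<one> 1 \<ominus>\<^bsub>UP R\<^esub> up_ring.monom (UP R) x 0"
  have "?XQ = ?X"
    using UP_subring_minus[OF assms(1) X] UP_subring_monom[OF K] one assms(2) by simp
  moreover have "?XQ \<in> carrier ?Q"
    using X by simp
  ultimately have "q \<otimes>\<^bsub>?Q\<^esub> ?XQ = q \<otimes>\<^bsub>UP R\<^esub> ?X"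
    using UP_subring_mult[OF assms(1,3)] by simp
  moreover have "?X \<in> root_ideal R x"
    unfolding root_ideal_def using K assms(2) by (intro P.P.genideal_self') auto
  moreover have "q \<in> carrier (UP R)"
    using assms(3) carrier_UP_subring[OF K] by simp
  ultimately show ?thesis
    using ideal.I_l_closed[OF root_ideal_is_ideal] K assms(2) by (metis subsetD)
qed

end

section \<open>Ideals of polynomial rings over a field\<close>

lemma (in field) UP_ideal_min_degree_dvd:
  assumes J: "ideal J (UP R)" and h: "h \<in> J" "h \<noteq> \<zero>\<^bsub>UP R\<^esub>"
    and h_min: "\<And>p. p \<in> J \<Longrightarrow> p \<noteq> \<zero>\<^bsub>UP R\<^esub> \<Longrightarrow> deg R h \<le> deg R p"
    and p: "p \<in> J"
  shows "\<exists>w \<in> carrier (UP R). p = w \<otimes>\<^bsub>UP R\<^esub> h"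
proof -
  interpret P: UP_cring R "UP R"
    by unfold_locales
  interpret J: ideal J "UP R"
    by (rule J)
  have hP: "h \<in> carrier (UP R)" and pP: "p \<in> carrier (UP R)"
    using h p by auto
  obtain q r k where q: "q \<in> carrier (UP R)" and r: "r \<in> carrier (UP R)"
    and division: "P.lcoeff h [^] (k::nat) \<odot>\<^bsub>UP R\<^esub> p = h \<otimes>\<^bsub>UP R\<^esub> q \<oplus>\<^bsub>UP R\<^esub> r"
    and r_small: "r = \<zero>\<^bsub>UP R\<^esub> \<or> deg R r < deg R h"
    using P.long_div_theorem[OF hP pP h(2)] by blast
  define c where "c = P.lcoeff h [^] k"
  have "P.lcoeff h \<in> Units R"
    using P.lcoeff_nonzero2[OF hP h(2)] hP by (simp add: field_Units)
  then have c: "c \<in> Units R"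
    unfolding c_def by (rule Units_pow_closed)
  have hq: "h \<otimes>\<^bsub>UP R\<^esub> q \<in> J"
    using J.I_r_closed[OF h(1) q] .
  have cR: "c \<in> carrier R"
    using c by blast
  have cp: "c \<odot>\<^bsub>UP R\<^esub> p \<in> J"
    using J.I_l_closed[OF p P.monom_closed[OF cR]] P.monom_mult_is_smult[OF cR pP] by metis
  have "r = \<ominus>\<^bsub>UP R\<^esub> (h \<otimes>\<^bsub>UP R\<^esub> q) \<oplus>\<^bsub>UP R\<^esub> c \<odot>\<^bsub>UP R\<^esub> p"
    using division hq r by (simp add: c_def P.P.a_assoc[symmetric] P.P.l_neg)
  then have "r \<in> J"
    using cp hq by simp
  have r0: "r = \<zero>\<^bsub>UP R\<^esub>"
    using h_min[OF \<open>r \<in> J\<close>] r_small by fastforce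
  have "p = (inv c \<otimes> c) \<odot>\<^bsub>UP R\<^esub> p"
    using c pP by simp
  also have "\<dots> = inv c \<odot>\<^bsub>UP R\<^esub> (c \<odot>\<^bsub>UP R\<^esub> p)"
    using c pP by (intro P.UP_smult_assoc1) auto
  also have "\<dots> = (inv c \<odot>\<^bsub>UP R\<^esub> q) \<otimes>\<^bsub>UP R\<^esub> h"
    using division c q hP r0 by (simp add: c_def P.UP_smult_assoc2 P.P.m_comm[OF hP q])
  finally show ?thesis
    using c q by auto
qed

lemma (in field) UP_proper_ideal_deg_pos:
  assumes J: "ideal J (UP R)" and proper: "\<one>\<^bsub>UP R\<^esub> \<notin> J" and h: "h \<in> J" "h \<noteq> \<zero>\<^bsub>UP R\<^esub>"
  shows "deg R h > 0"
proof (rule ccontr)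
  interpret P: UP_cring R "UP R"
    by unfold_locales
  interpret J: ideal J "UP R"
    by (rule J)
  assume "\<not> deg R h > 0"
  define c where "c = up_ring.coeff (UP R) h 0"
  have hP: "h \<in> carrier (UP R)"
    using J.Icarr[OF h(1)] .
  have h_const: "h = up_ring.monom (UP R) c 0"
    using P.deg_zero_impl_monom[OF hP] \<open>\<not> deg R h > 0\<close> unfolding c_def by simp
  have "c \<noteq> \<zero>"
    using h(2) h_const by (metis P.monom_zero)
  then have c: "c \<in> Units R"
    using hP by (simp add: c_def field_Units)
  have "up_ring.monom (UP R) (inv c) 0 \<otimes>\<^bsub>UP R\<^esub> h = \<one>\<^bsub>UP R\<^esub>"
    using c h_const P.monom_mult[of "inv c" c 0 0] Units_closed[OF c] by simp
  moreover have "up_ring.monom (UP R) (inv c) 0 \<otimes>\<^bsub>UP R\<^esub> h \<in> J"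
    using c h(1) by (intro J.I_l_closed) auto
  ultimately show False
    using proper by simp
qed

lemma (in ring) eval_map_rev_upt:
  assumes "\<And>i. f i \<in> carrier R" "x \<in> carrier R"
  shows "eval (map f (rev [0..<Suc n])) x = (\<Oplus>i\<in>{..n}. f i \<otimes> x [^] i)"
  by (induction n) (use assms in \<open>simp_all add: Pi_def\<close>)

lemma (in algebraically_closed) UP_root_exists:
  assumes p: "p \<in> carrier (UP L)" and deg: "deg L p > 0"
  shows "\<exists>x \<in> carrier L. UnivPoly.eval L L id x p = \<zero>"
proof -
  interpret P: UP_cring L "UP L"
    by unfold_locales
  let ?c = "up_ring.coeff (UP L) p" and ?d = "deg L p"
  define Q where "Q = map ?c (rev [0..<Suc ?d])"
  have "?c ?d \<noteq> \<zero>"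
    using P.lcoeff_nonzero2[OF p] deg by fastforce
  then have Q: "Q \<in> carrier (poly_ring L)"
    unfolding Q_def univ_poly_def polynomial_def using p by auto
  then have "size (roots Q) = ?d"
    using roots_over_carrier unfolding splitted_def Q_def by simp
  then obtain x where "x \<in># roots Q"
    using deg by (metis gr_implies_not0 size_empty multiset_nonemptyE)
  then have x: "x \<in> carrier L" "eval Q x = \<zero>"
    using roots_mem_iff_is_root[OF Q] by (auto simp: is_root_def)
  have "UnivPoly.eval L L id x p = (\<Oplus>i\<in>{..?d}. ?c i \<otimes> x [^] i)"
    using P.eval_on_carrier[OF p, of L id x] by simp
  also have "\<dots> = eval Q x"
    unfolding Q_def using p x(1) by (intro eval_map_rev_upt[symmetric]) auto
  finally show ?thesis
    using x by auto
qed

lemma (in algebraically_closed) UP_linear_factor_exists: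
  assumes p: "p \<in> carrier (UP L)" and deg: "deg L p > 0"
  shows "\<exists>x \<in> carrier L. \<exists>q \<in> carrier (UP L). p = q \<otimes>\<^bsub>UP L\<^esub>
           (up_ring.monom (UP L) \<one> 1 \<ominus>\<^bsub>UP L\<^esub> up_ring.monom (UP L) x 0)"
proof -
  interpret P: UP_cring L "UP L"
    by unfold_locales
  obtain x where x: "x \<in> carrier L" "UnivPoly.eval L L id x p = \<zero>"
    using UP_root_exists[OF assms] by blast
  let ?X = "up_ring.monom (UP L) \<one> 1 \<ominus>\<^bsub>UP L\<^esub> up_ring.monom (UP L) x 0"
  have X: "?X \<in> carrier (UP L)"
    using x(1) by simp
  have "carrier L \<noteq> {\<zero>}"
    using one_closed one_not_zero by blast
  then obtain q where q: "q \<in> carrier (UP L)"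
    and "p = ?X \<otimes>\<^bsub>UP L\<^esub> q \<oplus>\<^bsub>UP L\<^esub> up_ring.monom (UP L) \<zero> 0"
    using P.remainder_theorem[OF p x(1)] x(2) by auto
  then have "p = q \<otimes>\<^bsub>UP L\<^esub> ?X"
    using X q by (simp add: P.P.m_comm)
  then show ?thesis
    using x(1) q by blast
qed

lemma (in algebraically_closed) UP_proper_ideal_common_root:
  assumes J: "ideal J (UP L)" and proper: "\<one>\<^bsub>UP L\<^esub> \<notin> J"
  shows "\<exists>x \<in> carrier L. \<forall>p \<in> J. \<exists>q \<in> carrier (UP L). p = q \<otimes>\<^bsub>UP L\<^esub>
           (up_ring.monom (UP L) \<one> 1 \<ominus>\<^bsub>UP L\<^esub> up_ring.monom (UP L) x 0)"
proof -
  interpret P: UP_cring L "UP L"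
    by unfold_locales
  interpret J: ideal J "UP L"
    by (rule J)
  let ?X = "\<lambda>x. up_ring.monom (UP L) \<one> 1 \<ominus>\<^bsub>UP L\<^esub> up_ring.monom (UP L) x 0"
  show ?thesis
  proof (cases "J \<subseteq> {\<zero>\<^bsub>UP L\<^esub>}")
    case True
    then show ?thesis
      by (intro bexI[of _ \<zero>]) (auto intro!: bexI[of _ "\<zero>\<^bsub>UP L\<^esub>"])
  next
    case False
    then obtain p0 where "p0 \<in> J" "p0 \<noteq> \<zero>\<^bsub>UP L\<^esub>"
      by blast
    then obtain h where h: "h \<in> J" "h \<noteq> \<zero>\<^bsub>UP L\<^esub>"
      and h_min: "\<And>p. p \<in> J \<Longrightarrow> p \<noteq> \<zero>\<^bsub>UP L\<^esub> \<Longrightarrow> deg L h \<le> deg L p"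
      using ex_has_least_nat[of "\<lambda>p. p \<in> J \<and> p \<noteq> \<zero>\<^bsub>UP L\<^esub>" p0 "deg L"] by blast
    have hP: "h \<in> carrier (UP L)"
      using J.Icarr[OF h(1)] .
    have "deg L h > 0"
      using UP_proper_ideal_deg_pos[OF J proper h] .
    then obtain x q where x: "x \<in> carrier L" and q: "q \<in> carrier (UP L)"
      and h_factor: "h = q \<otimes>\<^bsub>UP L\<^esub> ?X x"
      using UP_linear_factor_exists[OF hP] by blast
    have "\<exists>q \<in> carrier (UP L). p = q \<otimes>\<^bsub>UP L\<^esub> ?X x" if p: "p \<in> J" for p
    proof -
      obtain w where w: "w \<in> carrier (UP L)" "p = w \<otimes>\<^bsub>UP L\<^esub> h"
        using UP_ideal_min_degree_dvd[OF J h h_min p] by blast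
      then have "p = (w \<otimes>\<^bsub>UP L\<^esub> q) \<otimes>\<^bsub>UP L\<^esub> ?X x"
        using q x by (simp add: h_factor P.P.m_assoc)
      then show ?thesis
        using w q by blast
    qed
    then show ?thesis
      using x by blast
  qed
qed

section \<open>Normal polynomials with invertible leading coefficient\<close>

lemma center_subset_carrier: "center R \<subseteq> carrier R"
  unfolding center_def by auto

lemma (in ring) subcring_center: "subcring (center R) R"
proof -
  have comm: "z \<otimes> a = a \<otimes> z" if "z \<in> center R" "a \<in> carrier R" for z a
    using that unfolding center_def by blast
  have carr: "z \<in> carrier R" if "z \<in> center R" for z
    using subsetD[OF center_subset_carrier that] .
  have "subring (center R) R"
  proof (rule subringI)
    show "\<ominus> z \<in> center R" if z: "z \<in> center R" for z
      unfolding center_def using z comm carr by (auto simp: l_minus r_minus)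
    show "z \<otimes> w \<in> center R" if z: "z \<in> center R" and w: "w \<in> center R" for z w
    proof -
      have "z \<otimes> w \<otimes> a = a \<otimes> (z \<otimes> w)" if a: "a \<in> carrier R" for a
      proof -
        have "z \<otimes> w \<otimes> a = z \<otimes> (a \<otimes> w)"
          using comm[OF w a] z w a carr by (simp add: m_assoc)
        also have "\<dots> = a \<otimes> z \<otimes> w"
          using comm[OF z a] z w a carr by (simp add: m_assoc[symmetric])
        also have "\<dots> = a \<otimes> (z \<otimes> w)"
          using z w a carr by (simp add: m_assoc)
        finally show ?thesis .
      qed
      then show ?thesis
        unfolding center_def using z w carr by blast
    qed
    show "z \<oplus> w \<in> center R" if z: "z \<in> center R" and w: "w \<in> center R" for z w
      unfolding center_def using z w comm carr by (auto simp: l_distr r_distr)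
  qed (auto simp: center_def)
  then show ?thesis
    using comm carr by (intro subcringI) auto
qed

context UP_ring
begin

lemma coeff_mult_deg_add:
  assumes p: "p \<in> carrier P" and q: "q \<in> carrier P"
  shows "up_ring.coeff P (p \<otimes>\<^bsub>P\<^esub> q) (deg R p + deg R q) = lcoeff p \<otimes> lcoeff q"
proof -
  let ?d = "deg R p" and ?e = "deg R q"
  have "up_ring.coeff P p i \<otimes> up_ring.coeff P q (?d + ?e - i)
      = (if ?d = i then up_ring.coeff P p i \<otimes> up_ring.coeff P q (?d + ?e - i) else \<zero>)" for i
  proof (cases "?d < i")
    case True
    then show ?thesis using p q by (simp add: deg_aboveD)
  next
    case False
    then have "?d = i \<or> ?e < ?d + ?e - i"
      by arith
    then show ?thesis using p q by (auto simp: deg_aboveD)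
  qed
  then have "up_ring.coeff P (p \<otimes>\<^bsub>P\<^esub> q) (?d + ?e)
      = (\<Oplus>i\<in>{..?d + ?e}. if ?d = i then up_ring.coeff P p i \<otimes> up_ring.coeff P q (?d + ?e - i) else \<zero>)"
    using p q by (simp cong: R.finsum_cong)
  also have "\<dots> = lcoeff p \<otimes> lcoeff q"
    using p q by (subst R.finsum_singleton) (auto simp: Pi_def)
  finally show ?thesis .
qed

lemma deg_mult_lcoeff_Units:
  assumes p: "p \<in> carrier P" and q: "q \<in> carrier P" "q \<noteq> \<zero>\<^bsub>P\<^esub>" and u: "lcoeff p \<in> Units R"
  shows "deg R (p \<otimes>\<^bsub>P\<^esub> q) = deg R p + deg R q"
proof (rule le_antisym)
  show "deg R (p \<otimes>\<^bsub>P\<^esub> q) \<le> deg R p + deg R q"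
    using deg_mult_ring[OF p q(1)] .
  have "lcoeff p \<otimes> lcoeff q \<noteq> \<zero>"
  proof
    assume "lcoeff p \<otimes> lcoeff q = \<zero>"
    then have "inv (lcoeff p) \<otimes> (lcoeff p \<otimes> lcoeff q) = \<zero>"
      using u by simp
    moreover have "inv (lcoeff p) \<otimes> (lcoeff p \<otimes> lcoeff q) = lcoeff q"
      using u R.Units_closed[OF u] lcoeff_closed[OF q(1)]
        R.m_assoc[of "inv (lcoeff p)" "lcoeff p" "lcoeff q", symmetric]
      by simp
    ultimately have "lcoeff q = \<zero>"
      by simp
    then show False
      using lcoeff_nonzero2[OF q] by simp
  qed
  then show "deg R p + deg R q \<le> deg R (p \<otimes>\<^bsub>P\<^esub> q)"
    using coeff_mult_deg_add[OF p q(1)] p q(1) by (intro deg_belowI) auto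
qed

lemma coeff_mult_const:
  assumes p: "p \<in> carrier P" and c: "c \<in> carrier R"
  shows "up_ring.coeff P (p \<otimes>\<^bsub>P\<^esub> up_ring.monom P c 0) n = up_ring.coeff P p n \<otimes> c"
proof -
  have "up_ring.coeff P (p \<otimes>\<^bsub>P\<^esub> up_ring.monom P c 0) n
      = (\<Oplus>i\<in>{..n}. up_ring.coeff P p i \<otimes> (if n = i then c else \<zero>))"
    using p c by (simp cong: R.finsum_cong add: le_antisym)
  also have "\<dots> = (\<Oplus>i\<in>{..n}. if n = i then up_ring.coeff P p i \<otimes> c else \<zero>)"
    using p c by (intro R.finsum_cong) (auto simp: Pi_def simp_implies_def)
  also have "\<dots> = up_ring.coeff P p n \<otimes> c"
    using p c by (subst R.finsum_singleton) (auto simp: Pi_def)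
  finally show ?thesis .
qed

lemma normal_elem_coeff_mult_inv_lcoeff_central:
  assumes f: "f \<in> carrier P" and normal: "normal_elem P f" and u: "lcoeff f \<in> Units R"
  shows "up_ring.coeff P f n \<otimes> inv (lcoeff f) \<in> center R"
proof -
  let ?u = "lcoeff f" and ?f = "up_ring.coeff P f"
  have u_carr: "?u \<in> carrier R" "inv ?u \<in> carrier R" and f_carr: "\<And>k. ?f k \<in> carrier R"
    using u f by auto
  have "a \<otimes> (?f n \<otimes> inv ?u) = (?f n \<otimes> inv ?u) \<otimes> a" if a: "a \<in> carrier R" for a
  proof -
    have "up_ring.monom P a 0 \<otimes>\<^bsub>P\<^esub> f \<in> (\<lambda>b. f \<otimes>\<^bsub>P\<^esub> b) ` carrier P"
      using normal imageI[OF monom_closed[OF a], of "\<lambda>b. b \<otimes>\<^bsub>P\<^esub> f" 0]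
      unfolding normal_elem_def by (simp only:)
    then obtain b where b: "b \<in> carrier P" and ab: "up_ring.monom P a 0 \<otimes>\<^bsub>P\<^esub> f = f \<otimes>\<^bsub>P\<^esub> b"
      by blast
    have "deg R b = 0"
    proof (cases "b = \<zero>\<^bsub>P\<^esub>")
      case False
      have "deg R f + deg R b = deg R (up_ring.monom P a 0 \<otimes>\<^bsub>P\<^esub> f)"
        using deg_mult_lcoeff_Units[OF f b False u] ab by simp
      also have "\<dots> \<le> deg R f"
        using deg_mult_ring[OF monom_closed[OF a, of 0] f] deg_monom_le[OF a, of 0] by linarith
      finally show ?thesis by simp
    qed simp
    define c where "c = up_ring.coeff P b 0"
    have c: "c \<in> carrier R"
      using b unfolding c_def by simp
    have b_const: "b = up_ring.monom P c 0"
      using deg_zero_impl_monom[OF b \<open>deg R b = 0\<close>] unfolding c_def .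
    have a_f: "a \<otimes> ?f k = ?f k \<otimes> c" for k
      using coeff_monom_mult[OF a f, of 0 k] coeff_mult_const[OF f c, of k] ab b_const by simp
    have "c = inv ?u \<otimes> (?u \<otimes> c)"
      using u u_carr c R.m_assoc[of "inv ?u" ?u c] by simp
    also have "\<dots> = inv ?u \<otimes> a \<otimes> ?u"
      using a_f[of "deg R f"] a u_carr by (simp add: R.m_assoc)
    finally have c_eq: "c = inv ?u \<otimes> a \<otimes> ?u" .
    have "a \<otimes> (?f n \<otimes> inv ?u) = (?f n \<otimes> c) \<otimes> inv ?u"
      using a_f[of n] a u_carr f_carr by (simp add: R.m_assoc[symmetric])
    also have "\<dots> = ?f n \<otimes> (inv ?u \<otimes> a \<otimes> ?u) \<otimes> inv ?u"
      using c_eq by simp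
    also have "\<dots> = (?f n \<otimes> inv ?u) \<otimes> a"
      using a u u_carr f_carr by (simp add: R.m_assoc)
    finally show ?thesis .
  qed
  then show ?thesis
    unfolding center_def using u_carr f_carr by auto
qed

lemma normal_elem_mult_inv_lcoeff_in_UP_center:
  assumes f: "f \<in> carrier P" and normal: "normal_elem P f" and u: "lcoeff f \<in> Units R"
  shows "f \<otimes>\<^bsub>P\<^esub> up_ring.monom P (inv (lcoeff f)) 0 \<in> carrier (UP (R\<lparr>carrier := center R\<rparr>))"
proof -
  let ?g = "f \<otimes>\<^bsub>P\<^esub> up_ring.monom P (inv (lcoeff f)) 0"
  have g: "?g \<in> carrier P"
    using f u by simp
  have "?g n \<in> center R" for n
  proof -
    have "?g n = up_ring.coeff P ?g n"
      using g unfolding P_def by (simp add: UP_def)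
    then show ?thesis
      using normal_elem_coeff_mult_inv_lcoeff_central[OF assms, of n] coeff_mult_const[OF f, of _ n] u
      by simp
  qed
  moreover have "?g \<in> carrier (UP R)"
    using g unfolding P_def .
  ultimately show ?thesis
    using R.carrier_UP_subring[OF center_subset_carrier] by blast
qed

lemma ideal_mult_const_Units_imp_mem:
  assumes J: "ideal J P" and f: "f \<in> carrier P" and u: "u \<in> Units R"
    and fu: "f \<otimes>\<^bsub>P\<^esub> up_ring.monom P (inv u) 0 \<in> J"
  shows "f \<in> J"
proof -
  have "up_ring.monom P (inv u) 0 \<otimes>\<^bsub>P\<^esub> up_ring.monom P u 0 = \<one>\<^bsub>P\<^esub>"
    using u R.Units_closed[OF u] monom_mult[of "inv u" u 0 0] by simp
  moreover have "f \<otimes>\<^bsub>P\<^esub> up_ring.monom P (inv u) 0 \<otimes>\<^bsub>P\<^esub> up_ring.monom P u 0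
      = f \<otimes>\<^bsub>P\<^esub> (up_ring.monom P (inv u) 0 \<otimes>\<^bsub>P\<^esub> up_ring.monom P u 0)"
    using f u R.Units_closed[OF u] by (intro P.m_assoc) auto
  moreover have "f \<otimes>\<^bsub>P\<^esub> up_ring.monom P (inv u) 0 \<otimes>\<^bsub>P\<^esub> up_ring.monom P u 0 \<in> J"
    using ideal.I_r_closed[OF J fu] R.Units_closed[OF u] by simp
  ultimately show ?thesis
    using f by simp
qed

end

theorem corollary4p23:
  fixes R :: "('a, 'm) ring_scheme" and fs :: "(nat \<Rightarrow> 'a) list"
  assumes dom: "nc_domain R"
    and noeth: "left_noetherian R"
    and center_F: "algebraically_closed (R\<lparr>carrier := center R\<rparr>)"
    and fs_carrier: "set fs \<subseteq> carrier (UP R)"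
    and fs_nonzero: "\<forall>f\<in>set fs. f \<noteq> \<zero>\<^bsub>UP R\<^esub>"
    and fs_normal: "\<forall>f\<in>set fs. normal_elem (UP R) f"
    and fs_lc: "\<forall>f\<in>set fs. coeff (UP R) f (deg R f) \<in> Units R"
    and V_empty: "zero_set R (left_gen (UP R) fs) = {}"
  shows "left_gen (UP R) fs = carrier (UP R)"
proof (rule ccontr)
  let ?I = "left_gen (UP R) fs" and ?Z = "R\<lparr>carrier := center R\<rparr>"
  assume proper: "?I \<noteq> carrier (UP R)"
  interpret R: ring R
    using dom unfolding nc_domain_def by blast
  interpret P: UP_ring R "UP R"
    by (simp add: UP_ring_def R.ring_axioms)
  interpret Z: algebraically_closed ?Z
    by (rule center_F)
  have I: "left_ideal (UP R) ?I"
    using P.P.left_ideal_left_gen[OF fs_carrier] .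
  have J: "ideal (?I \<inter> carrier (UP ?Z)) (UP ?Z)"
    using R.ideal_Int_carrier_UP_subcring[OF R.subcring_center I] .
  have "\<one>\<^bsub>UP ?Z\<^esub> \<notin> ?I \<inter> carrier (UP ?Z)"
    using proper P.P.left_ideal_one_imp_carrier[OF I] R.UP_subring_one by auto
  then obtain x where x: "x \<in> center R"
    and factor: "\<And>p. p \<in> ?I \<inter> carrier (UP ?Z) \<Longrightarrow> \<exists>q \<in> carrier (UP ?Z). p = q \<otimes>\<^bsub>UP ?Z\<^esub>
                   (up_ring.monom (UP ?Z) \<one>\<^bsub>?Z\<^esub> 1 \<ominus>\<^bsub>UP ?Z\<^esub> up_ring.monom (UP ?Z) x 0)"
    using Z.UP_proper_ideal_common_root[OF J] by auto
  have xR: "x \<in> carrier R"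
    using subsetD[OF center_subset_carrier x] .
  have "f \<in> root_ideal R x" if f: "f \<in> set fs" for f
  proof -
    let ?u = "P.lcoeff f"
    let ?g = "f \<otimes>\<^bsub>UP R\<^esub> up_ring.monom (UP R) (inv\<^bsub>R\<^esub> ?u) 0"
    have fP: "f \<in> carrier (UP R)" and u: "?u \<in> Units R"
      using f fs_carrier fs_lc by auto
    have "?g \<in> ?I \<inter> carrier (UP ?Z)"
      using f fP u fs_normal P.P.left_gen_mult_normal[OF fs_carrier]
        P.normal_elem_mult_inv_lcoeff_in_UP_center
      by auto
    then have "?g \<in> root_ideal R x"
      using factor R.linear_factor_multiple_in_root_ideal[OF subcring.axioms(1)[OF R.subcring_center] x] by force
    then show ?thesis
      by (rule P.ideal_mult_const_Units_imp_mem[OF R.root_ideal_is_ideal[OF xR] fP u])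
  qed
  then have "x \<in> zero_set R ?I"
    using R.zero_set_left_genI[OF xR] by blast
  then show False
    using V_empty by simp
qed

end
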